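(* Let $n\ge 4$, $Q=\{0,\dots,n-1\}$, and let $X_n$ be a transition semigroup of maximum cardinality among transition semigroups of minimal complete DFAs with state set $Q$, initial state $0$ and empty state $n-1$ accepting suffix-free languages. If $X_n\neq\mathbf{V}_{\mathrm{sf}}(n)$ and $X_n\neq\mathbf{W}_{\mathrm{sf}}(n)$, then $X_n$ contains no pair of conflicting transformations.
   Context: A language $L$ is suffix-free if whenever $w\in L$ and $u\in L$ with $u$ a suffix of $w$, then $u=w$. Transformations act on the right ($qt$ is the image of $q$ under $t$). The transition semigroup of a DFA is the semigroup of transformations of its state set generated by the transformations induced by its letters. For a semigroup $T$ of transformations of $Q$: an unordered pair $\{p,q\}$ of distinct states of $Q\setminus\{0,n-1\}$ is colliding in $T$ if there exist $t\in T$ and $r\in Q\setminus\{0,n-1\}$ with $0t=p$ and $rt=q$; the pair is focused by a transformation $u$ if $pu=qu=r$ for some $r\notin\{0,n-1\}$. Define $\mathbf{B}_{\mathrm{sf}}(n)=\{t:Q\to Q \mid 0\notin Qt,\ (n-1)t=n-1,\ \text{and for all } j\ge1:\ 0t^j=n-1 \text{ or } 0t^j\neq qt^j \text{ for all } 0<q<n-1\}$, $\mathbf{V}_{\mathrm{sf}}(n)=\{t\in\mathbf{B}_{\mathrm{sf}}(n)\mid \text{for all } p\neq q \text{ in } Q:\ pt=qt=n-1 \text{ or } pt\neq qt\}$, and $\mathbf{W}_{\mathrm{sf}}(n)=\{t\in\mathbf{B}_{\mathrm{sf}}(n)\mid 0t=n-1 \text{ or } qt=n-1 \text{ for all } 1\le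 q\le n-2\}$. Two transformations $t,t'\in\mathbf{B}_{\mathrm{sf}}(n)$ conflict if, whenever $t$ and $t'$ both belong to the transition semigroup of a DFA $\mathcal{D}$ (state set $Q$, initial state $0$), at least one of the following holds: (1) the language accepted by $\mathcal{D}$ is not suffix-free; (2) every two states from $\{1,\dots,n-2\}$ are colliding in that semigroup; (3) every two states from $\{1,\dots,n-2\}$ are focused by some transformation of that semigroup. *)

theory Defs
  imports Main
begin

text \<open>States are the natural numbers 0..n-1.  A transformation of Q = {0..<n}
  is represented canonically as a function nat => nat that maps Q into Q and
  fixes every number >= n.  Transformations act on the right: q t = t q, and
  the product "t then u" is the function composition u o t.\<close>

definition trans :: "nat \<Rightarrow> (nat \<Rightarrow> nat) set" where
  "trans n = {t. (\<forall>q<n. t q < n) \<and> (\<forall>q. n \<le> q \<longrightarrow> t q = q)}"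

definition is_dfa :: "nat \<Rightarrow> nat set \<Rightarrow> (nat \<Rightarrow> nat \<Rightarrow> nat) \<Rightarrow> nat set \<Rightarrow> bool" where
  "is_dfa n Alph delta F \<longleftrightarrow> finite Alph \<and> (\<forall>a\<in>Alph. delta a \<in> trans n) \<and> F \<subseteq> {..<n}"

definition delta_word :: "(nat \<Rightarrow> nat \<Rightarrow> nat) \<Rightarrow> nat \<Rightarrow> nat list \<Rightarrow> nat" where
  "delta_word delta q w = fold (\<lambda>a p. delta a p) w q"

definition lang :: "nat set \<Rightarrow> (nat \<Rightarrow> nat \<Rightarrow> nat) \<Rightarrow> nat set \<Rightarrow> nat list set" where
  "lang Alph delta F = {w. w \<in> lists Alph \<and> delta_word delta 0 w \<in> F}"

definition suffix_free :: "'a list set \<Rightarrow> bool" where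
  "suffix_free L \<longleftrightarrow> (\<forall>w\<in>L. \<forall>u\<in>L. (\<exists>v. w = v @ u) \<longrightarrow> u = w)"

definition tsg :: "nat set \<Rightarrow> (nat \<Rightarrow> nat \<Rightarrow> nat) \<Rightarrow> (nat \<Rightarrow> nat) set" where
  "tsg Alph delta = {(\<lambda>q. delta_word delta q w) | w. w \<in> lists Alph \<and> w \<noteq> []}"

definition minimal_dfa :: "nat \<Rightarrow> nat set \<Rightarrow> (nat \<Rightarrow> nat \<Rightarrow> nat) \<Rightarrow> nat set \<Rightarrow> bool" where
  "minimal_dfa n Alph delta F \<longleftrightarrow>
     (\<forall>q<n. \<exists>w\<in>lists Alph. delta_word delta 0 w = q) \<and>
     (\<forall>p<n. \<forall>q<n. p \<noteq> q \<longrightarrow>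
        (\<exists>w\<in>lists Alph. (delta_word delta p w \<in> F) \<noteq> (delta_word delta q w \<in> F)))"

definition empty_state :: "nat set \<Rightarrow> (nat \<Rightarrow> nat \<Rightarrow> nat) \<Rightarrow> nat set \<Rightarrow> nat \<Rightarrow> bool" where
  "empty_state Alph delta F e \<longleftrightarrow> (\<forall>w\<in>lists Alph. delta_word delta e w \<notin> F)"

definition sf_min_dfa :: "nat \<Rightarrow> nat set \<Rightarrow> (nat \<Rightarrow> nat \<Rightarrow> nat) \<Rightarrow> nat set \<Rightarrow> bool" where
  "sf_min_dfa n Alph delta F \<longleftrightarrow> is_dfa n Alph delta F \<and> minimal_dfa n Alph delta F \<and>
     empty_state Alph delta F (n - 1) \<and> suffix_free (lang Alph delta F)"

definition B_sf :: "nat \<Rightarrow> (nat \<Rightarrow> nat) set" where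
  "B_sf n = {t \<in> trans n. (\<forall>q<n. t q \<noteq> 0) \<and> t (n - 1) = n - 1 \<and>
     (\<forall>j\<ge>1. (t ^^ j) 0 = n - 1 \<or> (\<forall>q. 0 < q \<and> q < n - 1 \<longrightarrow> (t ^^ j) 0 \<noteq> (t ^^ j) q))}"

definition V_sf :: "nat \<Rightarrow> (nat \<Rightarrow> nat) set" where
  "V_sf n = {t \<in> B_sf n. \<forall>p<n. \<forall>q<n. p \<noteq> q \<longrightarrow> (t p = n - 1 \<and> t q = n - 1) \<or> t p \<noteq> t q}"

definition W_sf :: "nat \<Rightarrow> (nat \<Rightarrow> nat) set" where
  "W_sf n = {t \<in> B_sf n. t 0 = n - 1 \<or> (\<forall>q. 1 \<le> q \<and> q \<le> n - 2 \<longrightarrow> t q = n - 1)}"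

definition colliding :: "nat \<Rightarrow> (nat \<Rightarrow> nat) set \<Rightarrow> nat \<Rightarrow> nat \<Rightarrow> bool" where
  "colliding n T p q \<longleftrightarrow> (\<exists>t\<in>T. \<exists>r. 0 < r \<and> r < n - 1 \<and>
      ((t 0 = p \<and> t r = q) \<or> (t 0 = q \<and> t r = p)))"

definition focused :: "nat \<Rightarrow> (nat \<Rightarrow> nat) \<Rightarrow> nat \<Rightarrow> nat \<Rightarrow> bool" where
  "focused n u p q \<longleftrightarrow> (\<exists>r. 0 < r \<and> r < n - 1 \<and> u p = r \<and> u q = r)"

definition conflict :: "nat \<Rightarrow> (nat \<Rightarrow> nat) \<Rightarrow> (nat \<Rightarrow> nat) \<Rightarrow> bool" where
  "conflict n t t' \<longleftrightarrow> t \<in> B_sf n \<and> t' \<in> B_sf n \<and>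
    (\<forall>Alph delta F. is_dfa n Alph delta F \<and> t \<in> tsg Alph delta \<and> t' \<in> tsg Alph delta \<longrightarrow>
       \<not> suffix_free (lang Alph delta F) \<or>
       (\<forall>p q. 1 \<le> p \<and> p \<le> n - 2 \<and> 1 \<le> q \<and> q \<le> n - 2 \<and> p \<noteq> q \<longrightarrow> colliding n (tsg Alph delta) p q) \<or>
       (\<forall>p q. 1 \<le> p \<and> p \<le> n - 2 \<and> 1 \<le> q \<and> q \<le> n - 2 \<and> p \<noteq> q \<longrightarrow>
          (\<exists>u\<in>tsg Alph delta. focused n u p q)))"

end

theory Submission
  imports Defs "HOL-Library.FuncSet"
begin

text \<open>Suppose reading a nonempty word b before a word a does not change the state s reached
  from 0.  Unless s is the empty state, minimality gives a word z accepted from s, and then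
  both a z and its proper extension b a z are accepted, contradicting suffix-freeness.
  Hence no transformation of the semigroup merges 0 with a state r of Q - {0, n-1} other
  than into n - 1, and applying this to composites u \<circ> t, no u merges t 0 and t r either.
  If all pairs collide, every transformation is therefore injective outside n - 1, so the
  semigroup lies in V_sf(n); if all pairs are focused, every transformation sends 0 or all
  of Q - {0, n-1} to n - 1, so it lies in W_sf(n).  Both sets are closed under composition
  and are themselves transition semigroups of suffix-free minimal DFAs, so maximality forces
  equality.\<close>

lemma trans_comp: "t \<in> trans n \<Longrightarrow> u \<in> trans n \<Longrightarrow> u \<circ> t \<in> trans n"
  by (auto simp: trans_def)

lemma delta_word_Nil [simp]: "delta_word d q [] = q"
  by (simp add: delta_word_def)

lemma delta_word_Cons [simp]: "delta_word d q (a # w) = delta_word d (d a q) w"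
  by (simp add: delta_word_def)

lemma delta_word_append: "delta_word d q (u @ v) = delta_word d (delta_word d q u) v"
  by (simp add: delta_word_def)

lemma delta_word_less: "is_dfa n A d F \<Longrightarrow> w \<in> lists A \<Longrightarrow> q < n \<Longrightarrow> delta_word d q w < n"
  by (induction w arbitrary: q) (auto simp: is_dfa_def trans_def)

lemma delta_word_fixed: "is_dfa n A d F \<Longrightarrow> w \<in> lists A \<Longrightarrow> n \<le> q \<Longrightarrow> delta_word d q w = q"
  by (induction w arbitrary: q) (auto simp: is_dfa_def trans_def)

lemma tsgE:
  assumes "t \<in> tsg A d"
  obtains w where "w \<in> lists A" "w \<noteq> []" "t = (\<lambda>q. delta_word d q w)"
  using assms by (auto simp: tsg_def)

lemma tsgI: "w \<in> lists A \<Longrightarrow> w \<noteq> [] \<Longrightarrow> (\<lambda>q. delta_word d q w) \<in> tsg A d"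
  unfolding tsg_def by blast

lemma tsg_subset_trans: "is_dfa n A d F \<Longrightarrow> tsg A d \<subseteq> trans n"
  using delta_word_less delta_word_fixed unfolding trans_def tsg_def by fastforce

lemma tsg_comp:
  assumes "t \<in> tsg A d" "u \<in> tsg A d"
  shows "u \<circ> t \<in> tsg A d"
proof -
  obtain x where x: "x \<in> lists A" "x \<noteq> []" "t = (\<lambda>q. delta_word d q x)"
    using assms(1) by (rule tsgE)
  obtain z where z: "z \<in> lists A" "u = (\<lambda>q. delta_word d q z)"
    using assms(2) by (rule tsgE)
  have "u \<circ> t = (\<lambda>q. delta_word d q (x @ z))"
    using x z by (simp add: comp_def delta_word_append)
  moreover have "x @ z \<in> lists A" "x @ z \<noteq> []"
    using x z by auto
  ultimately show ?thesis
    by (simp add: tsgI)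
qed

subsection \<open>Transformations of a suffix-free minimal DFA\<close>

lemma sf_min_dfa_loop_reaches_empty:
  assumes dfa: "sf_min_dfa n A d F" and a: "a \<in> lists A" and b: "b \<in> lists A" "b \<noteq> []"
    and loop: "delta_word d 0 (b @ a) = delta_word d 0 a"
  shows "delta_word d 0 a = n - 1"
proof (rule ccontr)
  let ?s = "delta_word d 0 a"
  assume ne: "?s \<noteq> n - 1"
  have isd: "is_dfa n A d F" and min: "minimal_dfa n A d F" and emp: "empty_state A d F (n - 1)"
    and sf: "suffix_free (lang A d F)"
    using dfa by (auto simp: sf_min_dfa_def)
  have "0 < n"
    using ne delta_word_fixed[OF isd a, of 0] by (cases n) auto
  then have "?s < n" "n - 1 < n"
    using delta_word_less[OF isd a] by auto
  with min ne obtain z where z: "z \<in> lists A"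
    "(delta_word d ?s z \<in> F) \<noteq> (delta_word d (n - 1) z \<in> F)"
    unfolding minimal_dfa_def by blast
  with emp have "delta_word d ?s z \<in> F"
    by (auto simp: empty_state_def)
  then have "a @ z \<in> lang A d F" "b @ (a @ z) \<in> lang A d F"
    using z a b loop by (simp_all add: lang_def delta_word_append flip: append_assoc)
  then have "a @ z = b @ (a @ z)"
    using sf unfolding suffix_free_def by blast
  with b(2) show False
    by simp
qed

lemma sf_min_dfa_reachable:
  "sf_min_dfa n A d F \<Longrightarrow> q < n \<Longrightarrow> \<exists>y\<in>lists A. delta_word d 0 y = q"
  by (auto simp: sf_min_dfa_def minimal_dfa_def)

lemma sf_min_dfa_tsg_nonzero:
  assumes dfa: "sf_min_dfa n A d F" and "n \<ge> 2" "t \<in> tsg A d" "q < n"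
  shows "t q \<noteq> 0"
proof
  assume tq: "t q = 0"
  obtain x where x: "x \<in> lists A" "x \<noteq> []" "t = (\<lambda>q. delta_word d q x)"
    using assms(3) by (rule tsgE)
  obtain y where y: "y \<in> lists A" "delta_word d 0 y = q"
    using sf_min_dfa_reachable[OF dfa \<open>q < n\<close>] by blast
  have loop: "delta_word d 0 ((y @ x) @ []) = delta_word d 0 []"
    using x y tq by (simp add: delta_word_append)
  have "delta_word d 0 [] = n - 1"
    using sf_min_dfa_loop_reaches_empty[OF dfa _ _ _ loop] x y by simp
  with \<open>n \<ge> 2\<close> show False
    by simp
qed

lemma sf_min_dfa_tsg_fixes_empty:
  assumes dfa: "sf_min_dfa n A d F" and "n \<ge> 1" "t \<in> tsg A d"
  shows "t (n - 1) = n - 1"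
proof (rule ccontr)
  assume ne: "t (n - 1) \<noteq> n - 1"
  obtain x where x: "x \<in> lists A" "t = (\<lambda>q. delta_word d q x)"
    using assms(3) by (rule tsgE)
  have isd: "is_dfa n A d F" and min: "minimal_dfa n A d F" and emp: "empty_state A d F (n - 1)"
    using dfa by (auto simp: sf_min_dfa_def)
  have "n - 1 < n" "t (n - 1) < n"
    using \<open>n \<ge> 1\<close> delta_word_less[OF isd x(1), of "n - 1"] x(2) by auto
  with min ne obtain z where z: "z \<in> lists A"
    "(delta_word d (t (n - 1)) z \<in> F) \<noteq> (delta_word d (n - 1) z \<in> F)"
    unfolding minimal_dfa_def by blast
  moreover have "delta_word d (n - 1) (x @ z) \<notin> F" "delta_word d (n - 1) z \<notin> F"
    using emp z x by (auto simp: empty_state_def)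
  ultimately show False
    using x by (simp add: delta_word_append)
qed

lemma sf_min_dfa_tsg_merge_initial:
  assumes dfa: "sf_min_dfa n A d F" and "t \<in> tsg A d" "0 < r" "r < n - 1" "t 0 = t r"
  shows "t 0 = n - 1"
proof -
  obtain x where x: "x \<in> lists A" "x \<noteq> []" "t = (\<lambda>q. delta_word d q x)"
    using assms(2) by (rule tsgE)
  have "r < n"
    using assms(4) by linarith
  then obtain y where y: "y \<in> lists A" "delta_word d 0 y = r"
    using sf_min_dfa_reachable[OF dfa] by blast
  have "y \<noteq> []"
    using y \<open>0 < r\<close> by auto
  moreover have "delta_word d 0 (y @ x) = delta_word d 0 x"
    using x(3) y(2) assms(5) by (simp add: delta_word_append)
  ultimately have "delta_word d 0 x = n - 1"
    using sf_min_dfa_loop_reaches_empty[OF dfa x(1) y(1)] by blast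
  then show ?thesis
    using x(3) by simp
qed

subsection \<open>The semigroups V and W\<close>

text \<open>B_sf with its iterate condition required for j = 1 only.\<close>

definition B1_sf :: "nat \<Rightarrow> (nat \<Rightarrow> nat) set" where
  "B1_sf n = {t \<in> trans n. (\<forall>q<n. t q \<noteq> 0) \<and> t (n - 1) = n - 1 \<and>
     (t 0 = n - 1 \<or> (\<forall>q. 0 < q \<and> q < n - 1 \<longrightarrow> t 0 \<noteq> t q))}"

definition V1_sf :: "nat \<Rightarrow> (nat \<Rightarrow> nat) set" where
  "V1_sf n = {t \<in> B1_sf n. \<forall>p<n. \<forall>q<n. p \<noteq> q \<longrightarrow> (t p = n - 1 \<and> t q = n - 1) \<or> t p \<noteq> t q}"

definition W1_sf :: "nat \<Rightarrow> (nat \<Rightarrow> nat) set" where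
  "W1_sf n = {t \<in> B1_sf n. t 0 = n - 1 \<or> (\<forall>q. 1 \<le> q \<and> q \<le> n - 2 \<longrightarrow> t q = n - 1)}"

lemma funpow_mem_comp_closed:
  assumes "t \<in> S" "\<And>t u. t \<in> S \<Longrightarrow> u \<in> S \<Longrightarrow> u \<circ> t \<in> S" "j \<ge> 1"
  shows "t ^^ j \<in> S"
  using assms(3)
proof (induction j rule: dec_induct)
  case base
  then show ?case using assms(1) by simp
next
  case (step j)
  then show ?case using assms(1,2) by (simp only: funpow.simps)
qed

lemma B_sf_subset_B1_sf: "B_sf n \<subseteq> B1_sf n"
proof
  fix t assume t: "t \<in> B_sf n"
  then have "(t ^^ 1) 0 = n - 1 \<or> (\<forall>q. 0 < q \<and> q < n - 1 \<longrightarrow> (t ^^ 1) 0 \<noteq> (t ^^ 1) q)"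
    unfolding B_sf_def by blast
  with t show "t \<in> B1_sf n"
    unfolding B_sf_def B1_sf_def by simp
qed

lemma comp_closed_subset_B_sf:
  assumes "S \<subseteq> B1_sf n" "\<And>t u. t \<in> S \<Longrightarrow> u \<in> S \<Longrightarrow> u \<circ> t \<in> S"
  shows "S \<subseteq> B_sf n"
proof
  fix t assume t: "t \<in> S"
  have "t ^^ j \<in> B1_sf n" if "j \<ge> 1" for j
    using funpow_mem_comp_closed[OF t assms(2) that] assms(1) by blast
  with t assms(1) show "t \<in> B_sf n"
    unfolding B_sf_def B1_sf_def by auto
qed

lemma B1_sf_comp:
  assumes t: "t \<in> B1_sf n" and u: "u \<in> B1_sf n"
    and initial: "u (t 0) = n - 1 \<or> (\<forall>q. 0 < q \<and> q < n - 1 \<longrightarrow> u (t 0) \<noteq> u (t q))"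
  shows "u \<circ> t \<in> B1_sf n"
proof -
  have "t \<in> trans n" "u \<in> trans n"
    using t u by (auto simp: B1_sf_def)
  moreover have "u (t q) \<noteq> 0" if "q < n" for q
    using that t u by (auto simp: B1_sf_def trans_def)
  ultimately show ?thesis
    using t u initial by (auto simp: B1_sf_def trans_comp)
qed

lemma V1_sf_comp:
  assumes t: "t \<in> V1_sf n" and u: "u \<in> V1_sf n"
  shows "u \<circ> t \<in> V1_sf n"
proof -
  have tn: "t q < n" if "q < n" for q
    using that t by (auto simp: V1_sf_def B1_sf_def trans_def)
  have u_empty: "u (n - 1) = n - 1"
    using u by (simp add: V1_sf_def B1_sf_def)
  have inj: "(u (t p) = n - 1 \<and> u (t q) = n - 1) \<or> u (t p) \<noteq> u (t q)"
    if "p < n" "q < n" "p \<noteq> q" for p q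
  proof (cases "t p = t q")
    case True
    then have "t p = n - 1"
      using that t unfolding V1_sf_def by blast
    with True u_empty show ?thesis by simp
  next
    case False
    then show ?thesis
      using that tn[of p] tn[of q] u unfolding V1_sf_def by blast
  qed
  have "u (t 0) \<noteq> u (t q)" if "u (t 0) \<noteq> n - 1" "0 < q" "q < n - 1" for q
    using inj[of 0 q] that by auto
  then have "u \<circ> t \<in> B1_sf n"
    using t u by (intro B1_sf_comp) (auto simp: V1_sf_def)
  with inj show ?thesis
    unfolding V1_sf_def by auto
qed

lemma W1_sf_comp:
  assumes t: "t \<in> W1_sf n" and u: "u \<in> W1_sf n"
  shows "u \<circ> t \<in> W1_sf n"
proof -
  have u_empty: "u (n - 1) = n - 1"
    using u by (simp add: W1_sf_def B1_sf_def)
  have kills: "u (t 0) = n - 1 \<or> (\<forall>q. 1 \<le> q \<and> q \<le> n - 2 \<longrightarrow> u (t q) = n - 1)"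
    using t u_empty unfolding W1_sf_def by auto
  have "u (t 0) \<noteq> u (t q)" if "u (t 0) \<noteq> n - 1" "0 < q" "q < n - 1" for q
    using kills that by auto
  then have "u \<circ> t \<in> B1_sf n"
    using t u by (intro B1_sf_comp) (auto simp: W1_sf_def)
  with kills show ?thesis
    unfolding W1_sf_def by auto
qed

lemma V_sf_eq_V1_sf: "V_sf n = V1_sf n"
proof
  show "V_sf n \<subseteq> V1_sf n"
    using B_sf_subset_B1_sf by (auto simp: V_sf_def V1_sf_def)
  have "V1_sf n \<subseteq> B_sf n"
    by (rule comp_closed_subset_B_sf[OF _ V1_sf_comp]) (auto simp: V1_sf_def)
  then show "V1_sf n \<subseteq> V_sf n"
    by (auto simp: V_sf_def V1_sf_def)
qed

lemma W_sf_eq_W1_sf: "W_sf n = W1_sf n"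
proof
  show "W_sf n \<subseteq> W1_sf n"
    using B_sf_subset_B1_sf by (auto simp: W_sf_def W1_sf_def)
  have "W1_sf n \<subseteq> B_sf n"
    by (rule comp_closed_subset_B_sf[OF _ W1_sf_comp]) (auto simp: W1_sf_def)
  then show "W1_sf n \<subseteq> W_sf n"
    by (auto simp: W_sf_def W1_sf_def)
qed

definition all_colliding :: "nat \<Rightarrow> (nat \<Rightarrow> nat) set \<Rightarrow> bool" where
  "all_colliding n T \<longleftrightarrow> (\<forall>p q. 1 \<le> p \<and> p \<le> n - 2 \<and> 1 \<le> q \<and> q \<le> n - 2 \<and> p \<noteq> q \<longrightarrow>
     colliding n T p q)"

definition all_focused :: "nat \<Rightarrow> (nat \<Rightarrow> nat) set \<Rightarrow> bool" where
  "all_focused n T \<longleftrightarrow> (\<forall>p q. 1 \<le> p \<and> p \<le> n - 2 \<and> 1 \<le> q \<and> q \<le> n - 2 \<and> p \<noteq> q \<longrightarrow>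
     (\<exists>u\<in>T. focused n u p q))"

lemma conflict_all_colliding_or_all_focused:
  assumes "conflict n t t'" "sf_min_dfa n A d F" "t \<in> tsg A d" "t' \<in> tsg A d"
  shows "all_colliding n (tsg A d) \<or> all_focused n (tsg A d)"
  using assms unfolding conflict_def all_colliding_def all_focused_def sf_min_dfa_def by blast

lemma sf_min_dfa_tsg_subset_B1_sf:
  assumes dfa: "sf_min_dfa n A d F" and "n \<ge> 2"
  shows "tsg A d \<subseteq> B1_sf n"
proof
  fix t assume t: "t \<in> tsg A d"
  have "t \<in> trans n"
    using tsg_subset_trans[of n A d F] t dfa unfolding sf_min_dfa_def by blast
  moreover have "t 0 \<noteq> t q" if "t 0 \<noteq> n - 1" "0 < q" "q < n - 1" for q
    using sf_min_dfa_tsg_merge_initial[OF dfa t] that by auto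
  ultimately show "t \<in> B1_sf n"
    using sf_min_dfa_tsg_nonzero[OF dfa \<open>n \<ge> 2\<close> t] sf_min_dfa_tsg_fixes_empty[OF dfa _ t]
      \<open>n \<ge> 2\<close> by (auto simp: B1_sf_def)
qed

lemma sf_min_dfa_tsg_merge_image:
  assumes dfa: "sf_min_dfa n A d F" and "t \<in> tsg A d" "u \<in> tsg A d" "0 < r" "r < n - 1"
    and "u (t 0) = u (t r)"
  shows "u (t 0) = n - 1"
  using sf_min_dfa_tsg_merge_initial[OF dfa tsg_comp[OF assms(2,3)]] assms(4-6) by simp

lemma sf_min_dfa_tsg_subset_V1_sf:
  assumes dfa: "sf_min_dfa n A d F" and n: "n \<ge> 2"
    and coll: "all_colliding n (tsg A d)"
  shows "tsg A d \<subseteq> V1_sf n"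
proof
  fix s assume s: "s \<in> tsg A d"
  have B1: "s \<in> B1_sf n"
    using sf_min_dfa_tsg_subset_B1_sf[OF dfa n] s by blast
  have merge: "s p = n - 1" if "s p = s q" "p < q" "q < n" for p q
  proof (cases "q = n - 1")
    case True
    then show ?thesis
      using that B1 by (simp add: B1_sf_def)
  next
    case q: False
    show ?thesis
    proof (cases "p = 0")
      case True
      then show ?thesis
        using sf_min_dfa_tsg_merge_initial[OF dfa s, of q] that q by simp
    next
      case False
      with that q have "1 \<le> p \<and> p \<le> n - 2 \<and> 1 \<le> q \<and> q \<le> n - 2 \<and> p \<noteq> q"
        by linarith
      then have "colliding n (tsg A d) p q"
        using coll unfolding all_colliding_def by blast
      then obtain t r where t: "t \<in> tsg A d" "0 < r" "r < n - 1"
        and pq: "(t 0 = p \<and> t r = q) \<or> (t 0 = q \<and> t r = p)"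
        unfolding colliding_def by blast
      have "s (t 0) = s (t r)" "s (t 0) = s p"
        using pq \<open>s p = s q\<close> by auto
      then show ?thesis
        using sf_min_dfa_tsg_merge_image[OF dfa t(1) s t(2,3)] by simp
    qed
  qed
  have "(s p = n - 1 \<and> s q = n - 1) \<or> s p \<noteq> s q" if "p < n" "q < n" "p \<noteq> q" for p q
    using merge[of p q] merge[of q p] that by (cases "p < q") auto
  with B1 show "s \<in> V1_sf n"
    by (simp add: V1_sf_def)
qed

lemma sf_min_dfa_tsg_subset_W1_sf:
  assumes dfa: "sf_min_dfa n A d F" and n: "n \<ge> 2"
    and foc: "all_focused n (tsg A d)"
  shows "tsg A d \<subseteq> W1_sf n"
proof
  fix s assume s: "s \<in> tsg A d"
  have B1: "s \<in> B1_sf n"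
    using sf_min_dfa_tsg_subset_B1_sf[OF dfa n] s by blast
  have "s q = n - 1" if s0: "s 0 \<noteq> n - 1" and q: "1 \<le> q" "q \<le> n - 2" for q
  proof (rule ccontr)
    assume sq: "s q \<noteq> n - 1"
    have "s 0 \<noteq> s q" "s 0 \<noteq> 0" "s q \<noteq> 0" "s 0 < n" "s q < n"
      using B1 s0 q n by (auto simp: B1_sf_def trans_def)
    with s0 sq have "1 \<le> s 0 \<and> s 0 \<le> n - 2 \<and> 1 \<le> s q \<and> s q \<le> n - 2 \<and> s 0 \<noteq> s q"
      by linarith
    then obtain u r where u: "u \<in> tsg A d" and r: "r < n - 1" "u (s 0) = r" "u (s q) = r"
      using foc unfolding all_focused_def focused_def by blast
    have q': "0 < q" "q < n - 1"
      using q n by linarith+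
    have "u (s 0) = n - 1"
      using sf_min_dfa_tsg_merge_image[OF dfa s u q'] r(2,3) by simp
    with r show False
      by simp
  qed
  with B1 show "s \<in> W1_sf n"
    by (auto simp: W1_sf_def)
qed

subsection \<open>Realizing V and W\<close>

lemma finite_trans: "finite (trans n)"
proof -
  have "trans n \<subseteq> (\<lambda>g q. if q < n then g q else q) ` ({..<n} \<rightarrow>\<^sub>E {..<n})"
  proof
    fix t assume t: "t \<in> trans n"
    show "t \<in> (\<lambda>g q. if q < n then g q else q) ` ({..<n} \<rightarrow>\<^sub>E {..<n})"
    proof (rule image_eqI[where x = "restrict t {..<n}"])
      show "t = (\<lambda>q. if q < n then restrict t {..<n} q else q)"
        using t by (auto simp: trans_def)
      show "restrict t {..<n} \<in> {..<n} \<rightarrow>\<^sub>E {..<n}"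
        using t by (auto simp: trans_def)
    qed
  qed
  then show ?thesis
    by (rule finite_subset) (intro finite_imageI finite_PiE; simp)
qed

lemma finite_B1_sf: "finite (B1_sf n)"
  using finite_trans by (rule finite_subset[rotated]) (auto simp: B1_sf_def)

lemma tsg_eq_comp_closed_image:
  assumes img: "g ` A = S" and closed: "\<And>t u. t \<in> S \<Longrightarrow> u \<in> S \<Longrightarrow> u \<circ> t \<in> S"
  shows "tsg A g = S"
proof
  have "w \<in> lists A \<Longrightarrow> w \<noteq> [] \<Longrightarrow> (\<lambda>q. delta_word g q w) \<in> S" for w
  proof (induction w)
    case (Cons a w)
    have "a \<in> A"
      using Cons.prems by simp
    then have "g a \<in> S"
      using img by blast
    then show ?case
    proof (cases "w = []")
      case False
      then have "(\<lambda>q. delta_word g q w) \<circ> g a \<in> S"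
        using Cons closed \<open>g a \<in> S\<close> by simp
      then show ?thesis
        by (simp add: comp_def)
    qed simp
  qed simp
  then show "tsg A g \<subseteq> S"
    by (auto simp: tsg_def)
  show "S \<subseteq> tsg A g"
  proof
    fix t assume "t \<in> S"
    then obtain a where "a \<in> A" "t = g a"
      using img by auto
    then show "t \<in> tsg A g"
      using tsgI[of "[a]" A g] by simp
  qed
qed

definition sends :: "nat \<Rightarrow> nat \<Rightarrow> nat \<Rightarrow> nat \<Rightarrow> nat" where
  "sends n p q x = (if x < n then if x = p then q else n - 1 else x)"

lemma sf_min_dfa_realizes:
  assumes n: "n \<ge> 3" and "finite S" and S: "S \<subseteq> B1_sf n"
    and closed: "\<And>t u. t \<in> S \<Longrightarrow> u \<in> S \<Longrightarrow> u \<circ> t \<in> S"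
    and reach: "\<And>q. 0 < q \<Longrightarrow> q < n \<Longrightarrow> sends n 0 q \<in> S"
    and separate: "\<And>p. p < n - 1 \<Longrightarrow> sends n p 1 \<in> S"
  shows "\<exists>A d F. sf_min_dfa n A d F \<and> tsg A d = S"
proof -
  txt \<open>The letters enumerate S, and 1 is the only final state.\<close>
  define A where "A = {0..<card S}"
  obtain g where "bij_betw g A S"
    using ex_bij_betw_nat_finite[OF \<open>finite S\<close>] unfolding A_def by blast
  then have img: "g ` A = S"
    by (simp add: bij_betw_def)
  have tsg: "tsg A g = S"
    using tsg_eq_comp_closed_image[OF img closed] .
  have letter: "\<exists>a\<in>A. g a = t" if "t \<in> S" for t
  proof -
    have "t \<in> g ` A"
      using img that by simp
    then show ?thesis
      by blast
  qed
  have word: "(\<lambda>q. delta_word g q w) \<in> B1_sf n" if "w \<in> lists A" "w \<noteq> []" for w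
    using tsgI[OF that, of g] tsg S by blast
  have "g a \<in> trans n" if "a \<in> A" for a
    using img S that unfolding B1_sf_def by blast
  then have dfa: "is_dfa n A g {1}"
    using n by (simp add: is_dfa_def A_def)
  have "\<exists>w\<in>lists A. delta_word g 0 w = q" if "q < n" for q
  proof (cases "q = 0")
    case True
    show ?thesis
      using True by (intro bexI[of _ "[]"]) simp_all
  next
    case False
    with \<open>q < n\<close> obtain a where "a \<in> A" "g a = sends n 0 q"
      using letter[OF reach] by blast
    moreover have "sends n 0 q 0 = q"
      using that by (simp add: sends_def)
    ultimately show ?thesis
      by (intro bexI[of _ "[a]"]) simp_all
  qed
  moreover have "\<exists>w\<in>lists A. (delta_word g p w \<in> {1}) \<noteq> (delta_word g q w \<in> {1})"
    if "p < n" "q < n" "p \<noteq> q" for p q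
  proof -
    have separated: "\<exists>w\<in>lists A. delta_word g p w = 1 \<and> delta_word g q w \<noteq> 1"
      if pq: "p < n - 1" "q < n" "p \<noteq> q" for p q
    proof -
      obtain a where "a \<in> A" "g a = sends n p 1"
        using letter[OF separate[OF pq(1)]] by blast
      moreover have "sends n p 1 p = 1" "sends n p 1 q \<noteq> 1"
        using pq n by (auto simp: sends_def)
      ultimately show ?thesis
        by (intro bexI[of _ "[a]"]) simp_all
    qed
    show ?thesis
    proof (cases "p < n - 1")
      case True
      then show ?thesis
        using separated[of p q] that by fastforce
    next
      case False
      then have "q < n - 1"
        using that by linarith
      then show ?thesis
        using separated[of q p] that by fastforce
    qed
  qed
  ultimately have "minimal_dfa n A g {1}"
    unfolding minimal_dfa_def by blast
  moreover have "empty_state A g {1} (n - 1)"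
    unfolding empty_state_def
  proof
    fix w assume "w \<in> lists A"
    then have "delta_word g (n - 1) w = n - 1"
      using word[of w] by (cases "w = []") (auto simp: B1_sf_def)
    then show "delta_word g (n - 1) w \<notin> {1}"
      using n by simp
  qed
  moreover have "suffix_free (lang A g {1})"
    unfolding suffix_free_def
  proof (intro ballI impI)
    fix w u assume w: "w \<in> lang A g {1}" and u: "u \<in> lang A g {1}" and "\<exists>v. w = v @ u"
    then obtain v where v: "w = v @ u"
      by blast
    show "u = w"
    proof (rule ccontr)
      assume "u \<noteq> w"
      then have "v \<noteq> []"
        using v by auto
      have lists: "v \<in> lists A" "u \<in> lists A"
        using w u v by (auto simp: lang_def)
      let ?s = "delta_word g 0 v"
      have "?s \<noteq> 0" "?s < n"
        using word[OF lists(1) \<open>v \<noteq> []\<close>] n by (auto simp: B1_sf_def trans_def)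
      moreover have u1: "delta_word g 0 u = 1" and us: "delta_word g ?s u = 1"
        using u w v by (auto simp: lang_def delta_word_append)
      moreover have "u \<noteq> []"
        using u1 by auto
      then have "(\<lambda>q. delta_word g q u) \<in> B1_sf n"
        using word[OF lists(2)] by blast
      ultimately show False
        using n us unfolding B1_sf_def by (cases "?s = n - 1") auto
    qed
  qed
  ultimately have "sf_min_dfa n A g {1}"
    using dfa by (simp add: sf_min_dfa_def)
  with tsg show ?thesis
    by blast
qed

lemma sends_mem_V1_W1_sf:
  assumes "p < n - 1" "0 < q" "q < n"
  shows "sends n p q \<in> V1_sf n \<inter> W1_sf n"
  using assms by (auto simp: V1_sf_def W1_sf_def B1_sf_def trans_def sends_def)

lemma V1_sf_realizable:
  assumes n: "n \<ge> 3"
  shows "\<exists>A d F. sf_min_dfa n A d F \<and> tsg A d = V1_sf n"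
proof (rule sf_min_dfa_realizes[OF n])
  show "finite (V1_sf n)"
    using finite_B1_sf by (rule finite_subset[rotated]) (auto simp: V1_sf_def)
  show "V1_sf n \<subseteq> B1_sf n"
    by (auto simp: V1_sf_def)
  show "\<And>t u. t \<in> V1_sf n \<Longrightarrow> u \<in> V1_sf n \<Longrightarrow> u \<circ> t \<in> V1_sf n"
    by (rule V1_sf_comp)
  show "\<And>q. 0 < q \<Longrightarrow> q < n \<Longrightarrow> sends n 0 q \<in> V1_sf n"
    using sends_mem_V1_W1_sf n by auto
  show "\<And>p. p < n - 1 \<Longrightarrow> sends n p 1 \<in> V1_sf n"
    using sends_mem_V1_W1_sf n by auto
qed

lemma W1_sf_realizable:
  assumes n: "n \<ge> 3"
  shows "\<exists>A d F. sf_min_dfa n A d F \<and> tsg A d = W1_sf n"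
proof (rule sf_min_dfa_realizes[OF n])
  show "finite (W1_sf n)"
    using finite_B1_sf by (rule finite_subset[rotated]) (auto simp: W1_sf_def)
  show "W1_sf n \<subseteq> B1_sf n"
    by (auto simp: W1_sf_def)
  show "\<And>t u. t \<in> W1_sf n \<Longrightarrow> u \<in> W1_sf n \<Longrightarrow> u \<circ> t \<in> W1_sf n"
    by (rule W1_sf_comp)
  show "\<And>q. 0 < q \<Longrightarrow> q < n \<Longrightarrow> sends n 0 q \<in> W1_sf n"
    using sends_mem_V1_W1_sf n by auto
  show "\<And>p. p < n - 1 \<Longrightarrow> sends n p 1 \<in> W1_sf n"
    using sends_mem_V1_W1_sf n by auto
qed

lemma maximal_tsg_eq:
  assumes max: "\<forall>A d F. sf_min_dfa n A d F \<longrightarrow> card (tsg A d) \<le> card X"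
    and dfa: "sf_min_dfa n A d F" and "X \<subseteq> tsg A d"
  shows "X = tsg A d"
proof -
  have "finite (tsg A d)"
    using finite_trans tsg_subset_trans dfa unfolding sf_min_dfa_def by (metis finite_subset)
  moreover have "card (tsg A d) \<le> card X"
    using max dfa by blast
  ultimately show ?thesis
    using \<open>X \<subseteq> tsg A d\<close> card_seteq by blast
qed

lemma maximal_all_colliding_tsg_eq_V_sf:
  assumes "n \<ge> 3" and dfa: "sf_min_dfa n A d F" and "all_colliding n (tsg A d)"
    and max: "\<forall>A' d' F'. sf_min_dfa n A' d' F' \<longrightarrow> card (tsg A' d') \<le> card (tsg A d)"
  shows "tsg A d = V_sf n"
proof -
  obtain A' d' F' where "sf_min_dfa n A' d' F'" "tsg A' d' = V1_sf n"
    using V1_sf_realizable \<open>n \<ge> 3\<close> by blast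
  moreover have "tsg A d \<subseteq> V1_sf n"
    using sf_min_dfa_tsg_subset_V1_sf[OF dfa] assms(1,3) by simp
  ultimately show ?thesis
    using maximal_tsg_eq[OF max] V_sf_eq_V1_sf by metis
qed

lemma maximal_all_focused_tsg_eq_W_sf:
  assumes "n \<ge> 3" and dfa: "sf_min_dfa n A d F" and "all_focused n (tsg A d)"
    and max: "\<forall>A' d' F'. sf_min_dfa n A' d' F' \<longrightarrow> card (tsg A' d') \<le> card (tsg A d)"
  shows "tsg A d = W_sf n"
proof -
  obtain A' d' F' where "sf_min_dfa n A' d' F'" "tsg A' d' = W1_sf n"
    using W1_sf_realizable \<open>n \<ge> 3\<close> by blast
  moreover have "tsg A d \<subseteq> W1_sf n"
    using sf_min_dfa_tsg_subset_W1_sf[OF dfa] assms(1,3) by simp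
  ultimately show ?thesis
    using maximal_tsg_eq[OF max] W_sf_eq_W1_sf by metis
qed

theorem lemma4:
  fixes n :: nat and Alph :: "nat set" and delta :: "nat \<Rightarrow> nat \<Rightarrow> nat" and F :: "nat set"
    and X :: "(nat \<Rightarrow> nat) set"
  assumes "n \<ge> 4"
    and "sf_min_dfa n Alph delta F"
    and "X = tsg Alph delta"
    and "\<forall>Alph' delta' F'. sf_min_dfa n Alph' delta' F' \<longrightarrow> card (tsg Alph' delta') \<le> card X"
    and "X \<noteq> V_sf n"
    and "X \<noteq> W_sf n"
  shows "\<forall>t\<in>X. \<forall>t'\<in>X. t \<noteq> t' \<longrightarrow> \<not> conflict n t t'"
proof (intro ballI impI notI)
  fix t t' assume "t \<in> X" "t' \<in> X" "conflict n t t'"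
  then have "all_colliding n X \<or> all_focused n X"
    using conflict_all_colliding_or_all_focused assms(2,3) by blast
  moreover have "n \<ge> 3"
    using assms(1) by simp
  ultimately show False
    using maximal_all_colliding_tsg_eq_V_sf maximal_all_focused_tsg_eq_W_sf assms(2-6) by blast
qed

end
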